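(* Consider $N=Ln$ units in $L$ strata of equal size $n$, stratum $l$ containing $n_{l(1)}$ treated and $n_{l(0)}$ control units, with $n_1=\sum_l n_{l(1)}>0$, $n_0=\sum_l n_{l(0)}>0$ and $\sum_l n_{l(0)}n_{l(1)}>0$. Let $\sigma_0^2>0$ and $\boldsymbol\Sigma=\boldsymbol I_L\otimes\boldsymbol J_n+\sigma_0^2\boldsymbol I_N$ (units ordered by stratum, $\boldsymbol J_n$ the $n\times n$ all-ones matrix). Let $(\hat\mu,\hat\tau)'=\big[X'\boldsymbol\Sigma^{-1}X\big]^{-1}X'\boldsymbol\Sigma^{-1}\boldsymbol Y$ with $X=(\boldsymbol 1_N,\boldsymbol A)$. Then $\hat\tau=\lambda\hat\tau_1+(1-\lambda)\hat\tau_0$, where $$\hat\tau_0=\bar Y_1-\bar Y_0,\qquad \hat\tau_1=\frac{\sum_l n_{l(0)}n_{l(1)}(\bar Y_{l(1)}-\bar Y_{l(0)})}{\sum_l n_{l(0)}n_{l(1)}},\qquad \lambda=\frac{N\sum_l n_{l(0)}n_{l(1)}}{n_1n_0\sigma_0^2+N\sum_l n_{l(0)}n_{l(1)}},$$ $\bar Y_1,\bar Y_0$ being the overall treated and control sample means and $\bar Y_{l(a)}$ the mean outcome of group $a$ within stratum $l$. In particular $\lambda\to1$ (so $\hat\tau\to\hat\tau_1$) as $\sigma_0^2\to0$, and $\lambda$ is decreasing in $\sigma_0^2$.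
   Context: $\boldsymbol Y$ is the vector of observed outcomes and $\boldsymbol A$ the vector of binary treatment indicators. This is the generalized least squares estimate of $\tau$ in the nonparametric GP model $\boldsymbol Y\sim MVN(\mu\boldsymbol 1+\tau\boldsymbol A,\boldsymbol\Sigma)$ whose GP covariance encodes the known stratum structure ($k_{ij}=1$ within a stratum, $0$ otherwise). *)

theory Defs
  imports "HOL-Analysis.Analysis"
begin

text \<open>Units are indexed by pairs (l, j) of the finite types 'l (strata, L = CARD('l))
  and 'm (position within a stratum, n = CARD('m)). A is the 0/1 treatment vector,
  Y the outcome vector.\<close>

definition Sigma_mat :: "real \<Rightarrow> real^('l::finite \<times> 'm::finite)^('l \<times> 'm)" where
  "Sigma_mat s = (\<chi> i j. (if fst i = fst j then 1 else 0) + (if i = j then s else 0))"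

definition design :: "real^('l::finite \<times> 'm::finite) \<Rightarrow> real^2^('l \<times> 'm)" where
  "design A = (\<chi> i k. if k = 1 then 1 else A $ i)"

definition gls :: "real \<Rightarrow> real^('l::finite \<times> 'm::finite) \<Rightarrow> real^('l \<times> 'm) \<Rightarrow> real^2" where
  "gls s A Y = (matrix_inv (transpose (design A) ** matrix_inv (Sigma_mat s) ** design A)
                 ** transpose (design A) ** matrix_inv (Sigma_mat s)) *v Y"

definition tau_hat :: "real \<Rightarrow> real^('l::finite \<times> 'm::finite) \<Rightarrow> real^('l \<times> 'm) \<Rightarrow> real" where
  "tau_hat s A Y = gls s A Y $ 2"

definition n_la :: "real^('l::finite \<times> 'm::finite) \<Rightarrow> 'l \<Rightarrow> real \<Rightarrow> nat" where
  "n_la A l a = card {j. A $ (l, j) = a}"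

definition n_a :: "real^('l::finite \<times> 'm::finite) \<Rightarrow> real \<Rightarrow> nat" where
  "n_a A a = card {i. A $ i = a}"

definition Ybar_la :: "real^('l::finite \<times> 'm::finite) \<Rightarrow> real^('l \<times> 'm) \<Rightarrow> 'l \<Rightarrow> real \<Rightarrow> real" where
  "Ybar_la A Y l a = (\<Sum>j\<in>{j. A $ (l, j) = a}. Y $ (l, j)) / real (n_la A l a)"

definition Ybar_a :: "real^('l::finite \<times> 'm::finite) \<Rightarrow> real^('l \<times> 'm) \<Rightarrow> real \<Rightarrow> real" where
  "Ybar_a A Y a = (\<Sum>i\<in>{i. A $ i = a}. Y $ i) / real (n_a A a)"

definition W :: "real^('l::finite \<times> 'm::finite) \<Rightarrow> real" where
  "W A = (\<Sum>l\<in>UNIV. real (n_la A l 0) * real (n_la A l 1))"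

definition tau0_hat :: "real^('l::finite \<times> 'm::finite) \<Rightarrow> real^('l \<times> 'm) \<Rightarrow> real" where
  "tau0_hat A Y = Ybar_a A Y 1 - Ybar_a A Y 0"

definition tau1_hat :: "real^('l::finite \<times> 'm::finite) \<Rightarrow> real^('l \<times> 'm) \<Rightarrow> real" where
  "tau1_hat A Y = (\<Sum>l\<in>UNIV. real (n_la A l 0) * real (n_la A l 1)
                     * (Ybar_la A Y l 1 - Ybar_la A Y l 0)) / W A"

definition lam :: "real^('l::finite \<times> 'm::finite) \<Rightarrow> real \<Rightarrow> real" where
  "lam A s = (real CARD('l \<times> 'm) * W A) /
     (real (n_a A 1) * real (n_a A 0) * s + real CARD('l \<times> 'm) * W A)"

end

theory Submission
  imports Defs
begin

text \<open>The covariance \<open>\<Sigma>\<close> has an explicit inverse, so every entry of \<open>X'\<Sigma>\<inverse>X\<close> and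
  \<open>X'\<Sigma>\<inverse>Y\<close> is a combination of grand totals and of products of stratum totals.
  Cramer's rule for the \<open>2 \<times> 2\<close> normal equations then writes \<open>\<tau>\<close> as a single fraction with
  denominator \<open>n\<^sub>1n\<^sub>0\<sigma>\<^sub>0\<^sup>2 + N \<Sum>\<^sub>l n\<^sub>l\<^sub>(\<^sub>0\<^sub>)n\<^sub>l\<^sub>(\<^sub>1\<^sub>)\<close>, whose numerator is
  \<open>N\<close> times the numerator of \<open>\<tau>\<^sub>1\<close> plus \<open>\<sigma>\<^sub>0\<^sup>2 n\<^sub>1n\<^sub>0 \<tau>\<^sub>0\<close>. This is the claimed
  weighted average, and \<open>\<lambda> = K / (k\<sigma>\<^sub>0\<^sup>2 + K)\<close> with \<open>k, K > 0\<close> behaves as stated.\<close>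

lemma matrix_inv_eqI:
  fixes A :: "'a::semiring_1^'n^'m" and B :: "'a^'m^'n"
  assumes "A ** B = mat 1" "B ** A = mat 1"
  shows "matrix_inv A = B"
proof -
  have "A ** matrix_inv A = mat 1 \<and> matrix_inv A ** A = mat 1"
    unfolding matrix_inv_def by (rule someI[of _ B]) (use assms in blast)
  then have "B = B ** (A ** matrix_inv A)" by (simp add: matrix_mul_rid)
  also have "\<dots> = matrix_inv A"
    by (simp add: matrix_mul_assoc assms matrix_mul_lid)
  finally show ?thesis by simp
qed

lemma matrix_inv_2x2_mult_vec_2:
  fixes M :: "'a::field^2^2" and b :: "'a^2"
  assumes det: "M$1$1 * M$2$2 - M$1$2 * M$2$1 \<noteq> 0"
  shows "(matrix_inv M *v b) $ 2 = (M$1$1 * b$2 - M$2$1 * b$1) / (M$1$1 * M$2$2 - M$1$2 * M$2$1)"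
proof -
  define d where "d = M$1$1 * M$2$2 - M$1$2 * M$2$1"
  define B :: "'a^2^2" where "B = (\<chi> i j. if i = 1 then (if j = 1 then M$2$2/d else - M$1$2/d)
                                else (if j = 1 then - M$2$1/d else M$1$1/d))"
  have d: "d \<noteq> 0" using det unfolding d_def .
  have n21: "(2::2) \<noteq> 1" by simp
  have "M ** B = mat 1" "B ** M = mat 1"
    unfolding B_def matrix_matrix_mult_def mat_def vec_eq_iff forall_2 sum_2 using d n21
    by (simp add: field_simps, simp add: d_def algebra_simps)+
  then have "matrix_inv M = B" by (rule matrix_inv_eqI)
  then show ?thesis unfolding B_def matrix_vector_mult_def sum_2 d_def[symmetric] using d n21
    by (simp add: diff_divide_distrib)
qed

lemma sum_UNIV_prod:
  "(\<Sum>k\<in>(UNIV::('a::finite \<times> 'b::finite) set). f k) = (\<Sum>l\<in>UNIV. \<Sum>j\<in>UNIV. f (l, j))"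
  by (subst sum.cartesian_product) (simp add: case_prod_eta)

definition stratum_sum :: "real^('l::finite \<times> 'm::finite) \<Rightarrow> 'l \<Rightarrow> real" where
  "stratum_sum v l = (\<Sum>j\<in>UNIV. v $ (l, j))"

lemma sum_same_stratum:
  fixes v :: "real^('l::finite \<times> 'm::finite)"
  shows "(\<Sum>k\<in>UNIV. if fst i = fst k then v $ k else 0) = stratum_sum v (fst i)"
proof -
  have "(\<Sum>k\<in>UNIV. if fst i = fst k then v $ k else 0)
      = (\<Sum>l\<in>UNIV. if l = fst i then stratum_sum v l else 0)"
    unfolding sum_UNIV_prod stratum_sum_def by (intro sum.cong) auto
  then show ?thesis by simp
qed

text \<open>The inverse of \<open>I\<^sub>L \<otimes> J\<^sub>n + s I\<^sub>N\<close> is \<open>(I\<^sub>N - (s + n)\<inverse> I\<^sub>L \<otimes> J\<^sub>n) / s\<close>,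
  since \<open>J\<^sub>n\<^sup>2 = n J\<^sub>n\<close>.\<close>

definition Sigma_inv :: "real \<Rightarrow> real^('l::finite \<times> 'm::finite)^('l \<times> 'm)" where
  "Sigma_inv s = (\<chi> i j. ((if i = j then 1 else 0)
                    - (if fst i = fst j then 1 / (s + real CARD('m)) else 0)) / s)"

lemma Sigma_inv_mult_vec:
  fixes v :: "real^('l::finite \<times> 'm::finite)"
  shows "(Sigma_inv s *v v) $ i = (v $ i - stratum_sum v (fst i) / (s + real CARD('m))) / s"
proof -
  have "(Sigma_inv s *v v) $ i = (\<Sum>k\<in>UNIV. (if i = k then v $ k else 0) / s
          - (if fst i = fst k then v $ k else 0) / (s + real CARD('m)) / s)"
    unfolding matrix_vector_mult_def vec_lambda_beta
    by (intro sum.cong) (auto simp: Sigma_inv_def diff_divide_distrib left_diff_distrib)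
  also have "\<dots> = (v $ i - stratum_sum v (fst i) / (s + real CARD('m))) / s"
    by (simp add: sum_subtractf sum_divide_distrib[symmetric] sum_same_stratum diff_divide_distrib)
  finally show ?thesis .
qed

lemma Sigma_inv_mult_Sigma_mat:
  assumes "s > 0"
  shows "Sigma_inv s ** Sigma_mat s = (mat 1 :: real^('l::finite \<times> 'm::finite)^('l \<times> 'm))"
proof -
  have "(Sigma_inv s ** Sigma_mat s) $ i $ j = mat 1 $ i $ j" for i j :: "'l \<times> 'm"
  proof -
    define v where "v = column j (Sigma_mat s)"
    have "stratum_sum v l = (if l = fst j then s + real CARD('m) else 0)" for l
      unfolding stratum_sum_def v_def column_def Sigma_mat_def
      by (cases j) (auto simp: sum.distrib)
    moreover have "(Sigma_inv s ** Sigma_mat s) $ i $ j = (Sigma_inv s *v v) $ i"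
      unfolding v_def column_def matrix_matrix_mult_def matrix_vector_mult_def by simp
    moreover have "s + real CARD('m) > 0" using assms by (simp add: add_pos_nonneg)
    ultimately show ?thesis
      using assms unfolding Sigma_inv_mult_vec v_def column_def Sigma_mat_def mat_def by auto
  qed
  then show ?thesis by (simp add: vec_eq_iff)
qed

lemma matrix_inv_Sigma_mat:
  assumes "s > 0"
  shows "matrix_inv (Sigma_mat s :: real^('l::finite \<times> 'm::finite)^('l \<times> 'm)) = Sigma_inv s"
proof (rule matrix_inv_eqI)
  have "transpose (Sigma_inv s) = Sigma_inv s" "transpose (Sigma_mat s) = Sigma_mat s"
    unfolding Sigma_inv_def Sigma_mat_def transpose_def by (auto simp: vec_eq_iff)
  moreover show "Sigma_inv s ** Sigma_mat s = mat 1" by (rule Sigma_inv_mult_Sigma_mat[OF assms])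
  ultimately show "Sigma_mat s ** Sigma_inv s = mat 1"
    by (metis matrix_transpose_mul transpose_mat)
qed

lemma inner_Sigma_inv:
  fixes u v :: "real^('l::finite \<times> 'm::finite)"
  shows "u \<bullet> (Sigma_inv s *v v)
     = (u \<bullet> v - (\<Sum>l\<in>UNIV. stratum_sum u l * stratum_sum v l) / (s + real CARD('m))) / s"
proof -
  have "u \<bullet> (Sigma_inv s *v v)
      = (\<Sum>i\<in>UNIV. u $ i * v $ i) / s - (\<Sum>i\<in>UNIV. u $ i * stratum_sum v (fst i)) / (s + real CARD('m)) / s"
    by (simp add: inner_vec_def Sigma_inv_mult_vec diff_divide_distrib right_diff_distrib
        sum_subtractf sum_divide_distrib)
  also have "(\<Sum>i\<in>UNIV. u $ i * stratum_sum v (fst i)) = (\<Sum>l\<in>UNIV. stratum_sum u l * stratum_sum v l)"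
    unfolding sum_UNIV_prod by (simp add: stratum_sum_def sum_distrib_right)
  finally show ?thesis by (simp add: inner_vec_def diff_divide_distrib)
qed

lemma tau_hat_cramer:
  fixes A Y :: "real^('l::finite \<times> 'm::finite)" and s :: real
  defines "F u v \<equiv> u \<bullet> (matrix_inv (Sigma_mat s) *v v)"
  assumes det: "F 1 1 * F A A - F 1 A * F A 1 \<noteq> 0"
  shows "tau_hat s A Y = (F 1 1 * F A Y - F A 1 * F 1 Y) / (F 1 1 * F A A - F 1 A * F A 1)"
proof -
  define S where "S = matrix_inv (Sigma_mat s :: real^('l \<times> 'm)^('l \<times> 'm))"
  define X where "X = design A"
  have col: "column 1 X = 1" "column 2 X = A"
    unfolding X_def design_def column_def by (simp_all add: vec_eq_iff)
  have M: "(transpose X ** S ** X) $ p $ q = F (column p X) (column q X)" for p q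
    unfolding F_def S_def[symmetric] matrix_mul_assoc[symmetric]
    by (simp add: matrix_matrix_mult_def matrix_vector_mult_def transpose_def inner_vec_def column_def)
  have b: "((transpose X ** S) *v Y) $ p = F (column p X) Y" for p
    unfolding F_def S_def[symmetric] matrix_vector_mul_assoc[symmetric]
    by (simp add: matrix_vector_mult_def transpose_def inner_vec_def column_def)
  have "tau_hat s A Y = (matrix_inv (transpose X ** S ** X) *v ((transpose X ** S) *v Y)) $ 2"
    unfolding tau_hat_def gls_def X_def S_def by (simp add: matrix_mul_assoc matrix_vector_mul_assoc)
  then show ?thesis
    using det by (simp add: matrix_inv_2x2_mult_vec_2 M b col)
qed

lemma card_eq_sum_indicator: "real (card {x::'a::finite. P x}) = (\<Sum>x\<in>UNIV. if P x then 1 else 0)"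
  by (simp add: sum.If_cases)

lemma sum_Collect_eq_sum_indicator:
  "(\<Sum>x\<in>{x::'a::finite. P x}. f x) = (\<Sum>x\<in>UNIV. if P x then f x else (0::real))"
  by (simp add: sum.If_cases)

lemma card_mult_mean: "finite B \<Longrightarrow> real (card B) * (sum f B / real (card B)) = (sum f B :: real)"
  by (cases "card B = 0") auto

lemma sum_stratum_sum:
  fixes v :: "real^('l::finite \<times> 'm::finite)"
  shows "(\<Sum>l\<in>UNIV. stratum_sum v l) = (\<Sum>i\<in>UNIV. v $ i)"
  by (simp add: stratum_sum_def sum_UNIV_prod)

lemma stratum_shrinkage:
  fixes x s n :: real
  assumes "s \<noteq> 0" "s + n \<noteq> 0"
  shows "(x - n * x / (s + n)) / s = x / (s + n)"
proof -
  have "x - n * x / (s + n) = s * x / (s + n)"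
    using assms by (simp add: field_simps)
  then show ?thesis using assms by simp
qed

text \<open>The quotients below are Cramer's rule applied to the entries of \<open>X'\<Sigma>\<inverse>X\<close> and
  \<open>X'\<Sigma>\<inverse>Y\<close>, with \<open>N = n\<^sub>1 + n\<^sub>0\<close>, \<open>w = \<Sum>\<^sub>l n\<^sub>l\<^sub>(\<^sub>0\<^sub>)n\<^sub>l\<^sub>(\<^sub>1\<^sub>)\<close>,
  \<open>S\<^sub>1 = A \<bullet> Y\<close>, \<open>T = 1 \<bullet> Y\<close> and \<open>P\<close> the sum of products of stratum totals of \<open>A\<close> and \<open>Y\<close>.\<close>

lemma gls_cramer_quotient:
  fixes s n c N n1 n0 w T S1 P :: real
  assumes s: "s > 0" and c: "c = s + n" "c > 0"
    and N: "N = n1 + n0" and D: "n1 * n0 * s + N * w \<noteq> 0"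
  shows "N/c * ((n1 - (n*n1 - w)/c)/s) - n1/c * (n1/c) \<noteq> 0"
    and "(N/c * ((S1 - P/c)/s) - n1/c * (T/c)) / (N/c * ((n1 - (n*n1 - w)/c)/s) - n1/c * (n1/c))
       = (N * (n*S1 - P) + s * (N*S1 - n1*T)) / (n1 * n0 * s + N * w)"
proof -
  have num: "N/c * ((S1 - P/c)/s) - n1/c * (T/c) = (N * (n*S1 - P) + s * (N*S1 - n1*T)) / (s*c*c)"
    using s c(2) by (simp add: field_simps) (simp add: c(1) algebra_simps)
  have den: "N/c * ((n1 - (n*n1 - w)/c)/s) - n1/c * (n1/c) = (n1 * n0 * s + N * w) / (s*c*c)"
    using s c(2) by (simp add: field_simps) (simp add: c(1) N algebra_simps)
  show "N/c * ((n1 - (n*n1 - w)/c)/s) - n1/c * (n1/c) \<noteq> 0"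
    unfolding den using s c(2) D by simp
  show "(N/c * ((S1 - P/c)/s) - n1/c * (T/c)) / (N/c * ((n1 - (n*n1 - w)/c)/s) - n1/c * (n1/c))
       = (N * (n*S1 - P) + s * (N*S1 - n1*T)) / (n1 * n0 * s + N * w)"
    unfolding num den using s c(2) D by simp
qed

lemma weighted_average_identity:
  fixes s n N n1 n0 w T S1 P :: real
  assumes n1: "n1 \<noteq> 0" and n0: "n0 \<noteq> 0" and w: "w \<noteq> 0"
    and N: "N = n1 + n0" and D_nz: "n1 * n0 * s + N * w \<noteq> 0"
  shows "(N * (n*S1 - P) + s * (N*S1 - n1*T)) / (n1 * n0 * s + N * w)
       = N * w / (n1 * n0 * s + N * w) * ((n*S1 - P) / w)
         + (1 - N * w / (n1 * n0 * s + N * w)) * (S1/n1 - (T - S1)/n0)"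
proof -
  define D where "D = n1 * n0 * s + N * w"
  have D0: "D \<noteq> 0" using D_nz unfolding D_def .
  have treated: "N * w / D * ((n*S1 - P) / w) = N * (n*S1 - P) / D"
    using w by simp
  have weight: "1 - N * w / D = n1 * n0 * s / D"
    using D0 by (simp add: field_simps D_def)
  have control: "n1 * n0 * s / D * (S1/n1 - (T - S1)/n0) = s * (N*S1 - n1*T) / D"
    using n1 n0 D0 unfolding N by (simp add: field_simps)
  show ?thesis
    unfolding D_def[symmetric] treated weight control by (simp add: add_divide_distrib)
qed

context
  fixes A :: "real^('l::finite \<times> 'm::finite)"
  assumes binary: "\<forall>i. A $ i = 0 \<or> A $ i = 1"
begin

lemma indicator_treated: "(if A $ i = 1 then x else 0) = A $ i * x"
  using binary[rule_format, of i] by auto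

lemma indicator_control: "(if A $ i = 0 then x else 0) = (1 - A $ i) * x"
  using binary[rule_format, of i] by auto

lemma n_la_treated: "real (n_la A l 1) = stratum_sum A l"
  unfolding n_la_def card_eq_sum_indicator stratum_sum_def by (simp add: indicator_treated)

lemma n_la_control: "real (n_la A l 0) = real CARD('m) - stratum_sum A l"
  unfolding n_la_def card_eq_sum_indicator stratum_sum_def
  by (simp add: indicator_control sum_subtractf)

lemma n_a_treated: "real (n_a A 1) = 1 \<bullet> A"
  unfolding n_a_def card_eq_sum_indicator by (simp add: indicator_treated inner_vec_def)

lemma n_a_treated_plus_control: "real (n_a A 1) + real (n_a A 0) = real CARD('l \<times> 'm)"
  unfolding n_a_def card_eq_sum_indicator
  by (simp add: indicator_treated indicator_control sum_subtractf)

lemma inner_treatment_self: "A \<bullet> A = 1 \<bullet> A"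
  unfolding inner_vec_def using binary by (intro sum.cong) auto

lemma W_eq: "W A = real CARD('m) * real (n_a A 1) - (\<Sum>l\<in>UNIV. stratum_sum A l * stratum_sum A l)"
  unfolding W_def n_la_treated n_la_control n_a_treated
  by (simp add: algebra_simps sum_subtractf sum_distrib_left inner_vec_def flip: sum_stratum_sum)

lemma treated_total: "real (n_la A l 1) * Ybar_la A Y l 1 = stratum_sum (A * Y) l"
  unfolding Ybar_la_def n_la_def
  by (subst card_mult_mean) (simp_all add: sum_Collect_eq_sum_indicator indicator_treated stratum_sum_def)

lemma control_total: "real (n_la A l 0) * Ybar_la A Y l 0 = stratum_sum Y l - stratum_sum (A * Y) l"
  unfolding Ybar_la_def n_la_def
  by (subst card_mult_mean)
    (simp_all add: sum_Collect_eq_sum_indicator indicator_control stratum_sum_def left_diff_distrib sum_subtractf)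

lemma tau1_hat_eq:
  "tau1_hat A Y = (real CARD('m) * (A \<bullet> Y) - (\<Sum>l\<in>UNIV. stratum_sum A l * stratum_sum Y l)) / W A"
proof -
  have "real (n_la A l 0) * real (n_la A l 1) * (Ybar_la A Y l 1 - Ybar_la A Y l 0)
      = real (n_la A l 0) * (real (n_la A l 1) * Ybar_la A Y l 1)
        - real (n_la A l 1) * (real (n_la A l 0) * Ybar_la A Y l 0)" for l
    by (simp add: algebra_simps)
  also have "\<dots> l = real CARD('m) * stratum_sum (A * Y) l - stratum_sum A l * stratum_sum Y l" for l
    unfolding treated_total control_total by (simp add: n_la_treated n_la_control algebra_simps)
  finally have "real (n_la A l 0) * real (n_la A l 1) * (Ybar_la A Y l 1 - Ybar_la A Y l 0)
      = real CARD('m) * stratum_sum (A * Y) l - stratum_sum A l * stratum_sum Y l" for l .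
  moreover have "(\<Sum>l\<in>UNIV. stratum_sum (A * Y) l) = A \<bullet> Y"
    by (simp add: sum_stratum_sum inner_vec_def)
  ultimately show ?thesis
    unfolding tau1_hat_def by (simp add: sum_subtractf flip: sum_distrib_left)
qed

lemma tau0_hat_eq: "tau0_hat A Y = (A \<bullet> Y) / real (n_a A 1) - (1 \<bullet> Y - A \<bullet> Y) / real (n_a A 0)"
  unfolding tau0_hat_def Ybar_a_def n_a_def
  by (simp add: sum_Collect_eq_sum_indicator indicator_treated indicator_control inner_vec_def
      left_diff_distrib sum_subtractf)

lemma tau_hat_closed_form:
  assumes s: "s > 0" and W: "W A > 0"
  shows "tau_hat s A Y
    = (real CARD('l \<times> 'm) * (real CARD('m) * (A \<bullet> Y) - (\<Sum>l\<in>UNIV. stratum_sum A l * stratum_sum Y l))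
       + s * (real CARD('l \<times> 'm) * (A \<bullet> Y) - real (n_a A 1) * (1 \<bullet> Y)))
      / (real (n_a A 1) * real (n_a A 0) * s + real CARD('l \<times> 'm) * W A)"
proof -
  define n where "n = real CARD('m)"
  define N where "N = real CARD('l \<times> 'm)"
  define c where "c = s + n"
  define F where "F u v = u \<bullet> (matrix_inv (Sigma_mat s) *v v)" for u v :: "real^('l \<times> 'm)"
  have c: "c > 0" "s \<noteq> 0" "c \<noteq> 0" using s unfolding c_def n_def by (auto intro: add_pos_nonneg)
  have F: "F u v = (u \<bullet> v - (\<Sum>l\<in>UNIV. stratum_sum u l * stratum_sum v l) / c) / s" for u v
    unfolding F_def matrix_inv_Sigma_mat[OF s] inner_Sigma_inv c_def n_def ..
  have ones: "stratum_sum (1 :: real^('l \<times> 'm)) l = n" for l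
    unfolding stratum_sum_def n_def by simp
  have sum_ones: "(\<Sum>l\<in>UNIV. n * stratum_sum v l) = n * (1 \<bullet> v)" for v :: "real^('l \<times> 'm)"
    by (simp add: sum_distrib_left[symmetric] sum_stratum_sum inner_vec_def)
  have F11: "F 1 1 = N / c"
    using stratum_shrinkage[OF c(2), of n N] c
    by (simp add: F ones inner_vec_def N_def n_def c_def algebra_simps)
  have F1A: "F 1 A = real (n_a A 1) / c" and FA1: "F A 1 = real (n_a A 1) / c"
    using stratum_shrinkage[OF c(2), of n "real (n_a A 1)"] c
    by (simp_all add: F ones sum_ones n_a_treated inner_commute mult.commute[of _ n] c_def)
  have F1Y: "F 1 Y = (1 \<bullet> Y) / c"
    using stratum_shrinkage[OF c(2), of n "1 \<bullet> Y"] c by (simp add: F ones sum_ones c_def)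
  have FAA: "F A A = (real (n_a A 1) - (n * real (n_a A 1) - W A) / c) / s"
    by (simp add: F W_eq inner_treatment_self n_a_treated n_def)
  have FAY: "F A Y = (A \<bullet> Y - (\<Sum>l\<in>UNIV. stratum_sum A l * stratum_sum Y l) / c) / s"
    by (rule F)
  have N: "N = real (n_a A 1) + real (n_a A 0)"
    unfolding N_def n_a_treated_plus_control ..
  have "real (n_a A 1) * real (n_a A 0) * s + N * W A > 0"
    using s W unfolding N_def by (intro add_nonneg_pos) auto
  note quotient = gls_cramer_quotient[OF s c_def c(1) N, of "W A", OF less_imp_neq[OF this, symmetric]]
  have "F 1 1 * F A A - F 1 A * F A 1 \<noteq> 0"
    using quotient(1) unfolding F11 F1A FA1 FAA .
  then have "tau_hat s A Y = (F 1 1 * F A Y - F A 1 * F 1 Y) / (F 1 1 * F A A - F 1 A * F A 1)"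
    unfolding F_def by (rule tau_hat_cramer)
  also have "\<dots> = (N * (n * (A \<bullet> Y) - (\<Sum>l\<in>UNIV. stratum_sum A l * stratum_sum Y l))
       + s * (N * (A \<bullet> Y) - real (n_a A 1) * (1 \<bullet> Y)))
      / (real (n_a A 1) * real (n_a A 0) * s + N * W A)"
    unfolding F11 F1A FA1 FAA FAY F1Y by (rule quotient(2))
  finally show ?thesis unfolding N_def n_def .
qed

end

lemma tendsto_shrinkage_weight:
  fixes k K :: real
  assumes "K \<noteq> 0"
  shows "((\<lambda>x. K / (k * x + K)) \<longlongrightarrow> 1) (at_right 0)"
proof -
  have "((\<lambda>x. K / (k * x + K)) \<longlongrightarrow> K / (k * 0 + K)) (at_right 0)"
    using assms by (intro tendsto_intros) auto
  then show ?thesis using assms by simp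
qed

lemma shrinkage_weight_strict_decreasing:
  fixes k K x y :: real
  assumes "K > 0" "k > 0" "0 < x" "x < y"
  shows "K / (k * y + K) < K / (k * x + K)"
  using assms by (intro divide_strict_left_mono mult_pos_pos add_pos_pos) auto

theorem mainTheorem5:
  fixes A Y :: "real^('l::finite \<times> 'm::finite)" and s :: real
  assumes binary: "\<forall>i. A $ i = 0 \<or> A $ i = 1"
    and n1_pos: "n_a A 1 > 0" and n0_pos: "n_a A 0 > 0"
    and W_pos: "W A > 0"
    and s_pos: "s > 0"
  shows "tau_hat s A Y = lam A s * tau1_hat A Y + (1 - lam A s) * tau0_hat A Y
         \<and> (lam A \<longlongrightarrow> 1) (at_right 0)
         \<and> (\<forall>s1 s2. 0 < s1 \<longrightarrow> s1 < s2 \<longrightarrow> lam A s2 < lam A s1)"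
proof (intro conjI allI impI)
  define K where "K = real CARD('l \<times> 'm) * W A"
  define k where "k = real (n_a A 1) * real (n_a A 0)"
  have K: "K > 0" and k: "k > 0"
    using W_pos n1_pos n0_pos unfolding K_def k_def by simp_all
  have "k * s + K > 0"
    using K k s_pos by (intro add_pos_pos mult_pos_pos)
  have lam: "lam A = (\<lambda>x. K / (k * x + K))"
    unfolding lam_def K_def k_def by (simp add: fun_eq_iff)
  show "tau_hat s A Y = lam A s * tau1_hat A Y + (1 - lam A s) * tau0_hat A Y"
    unfolding tau_hat_closed_form[OF binary s_pos W_pos] tau1_hat_eq[OF binary]
      tau0_hat_eq[OF binary] lam_def
    using n1_pos n0_pos W_pos \<open>k * s + K > 0\<close> n_a_treated_plus_control[OF binary]
    by (intro weighted_average_identity) (auto simp: K_def k_def)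
  show "(lam A \<longlongrightarrow> 1) (at_right 0)"
    unfolding lam using K by (intro tendsto_shrinkage_weight) simp
  show "lam A s2 < lam A s1" if "0 < s1" "s1 < s2" for s1 s2
    unfolding lam using K k that by (rule shrinkage_weight_strict_decreasing)
qed

end
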